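(* Let ${\mathsf K},{\mathsf N}\ge1$, $t\in\{0,\ldots,{\mathsf K}-1\}$, and $\mathbb{D}\in\mathbb{F}_2^{{\mathsf K}\times{\mathsf N}}$ with rows $\mathbf y_1,\ldots,\mathbf y_{\mathsf K}$. Let $\mathcal L\subseteq[{\mathsf K}]$ satisfy $|\mathcal L|=\mathrm{rank}_2(\mathbb{D}_{\mathcal L})=\mathrm{rank}_2(\mathbb{D})$, let $\mathcal A\subseteq[{\mathsf K}]\setminus\mathcal L$ with $|\mathcal A|=t+1$, and set $\mathcal B=\mathcal L\cup\mathcal A$. Let $\mathcal W\subseteq\mathcal B$ with $|\mathcal W|=t$ and $i\in[{\mathsf N}]$. Then the number of users $k\in\mathcal B\setminus\mathcal W$ satisfying both $\mathrm{rank}_2(\mathbb{D}_{\mathcal B\setminus(\mathcal W\cup\{k\})})=|\mathcal L|$ and $y_{k,i}\neq0$ is even. Equivalently: in the sum $\bigoplus_{\mathcal V\in\mathscr V_{\mathcal B}}W_{\mathcal B\setminus\mathcal V}$, the number of multicast messages $W_{\mathcal B\setminus\mathcal V}$ (with $\mathcal V\in\mathscr V_{\mathcal B}$) that contain the subfile $F_{i,\mathcal W}$ with nonzero coefficient is even.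
   Context: $\mathbb{D}_{\mathcal S}$ denotes the submatrix of $\mathbb{D}$ formed by the rows with indices in $\mathcal S$. Subfiles: for $i\in[{\mathsf N}]$ and $\mathcal W\subseteq[{\mathsf K}]$ with $|\mathcal W|=t$, $F_{i,\mathcal W}$ is a vector over $\mathbb{F}_2$ (all of a common length). Blocks: $B_{k,\mathcal W}=\sum_{n\in[{\mathsf N}]}y_{k,n}F_{n,\mathcal W}$. Multicast messages: for $\mathcal S\subseteq[{\mathsf K}]$ with $|\mathcal S|=t+1$, $W_{\mathcal S}=\bigoplus_{k\in\mathcal S}B_{k,\mathcal S\setminus\{k\}}$ (sum over $\mathbb{F}_2$). For $\mathcal B\subseteq[{\mathsf K}]$, $\mathscr V_{\mathcal B}$ is the family of subsets $\mathcal V\subseteq\mathcal B$ with $|\mathcal V|=|\mathcal L|$ and $\mathrm{rank}_2(\mathbb{D}_{\mathcal V})=|\mathcal L|$. Note that for $\mathcal V\in\mathscr V_{\mathcal B}$, $|\mathcal B\setminus\mathcal V|=t+1$, and $F_{i,\mathcal W}$ appears in $W_{\mathcal B\setminus\mathcal V}$ with coefficient $y_{k,i}$ exactly when $\mathcal B\setminus\mathcal V=\mathcal W\cup\{k\}$. *)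

theory Defs
  imports "HOL-Library.Z2" "Jordan_Normal_Form.DL_Rank"
begin

text \<open>GF(2) rank of the submatrix of D formed by the rows with indices in S
  (rows indexed from 0). It is the library rank (dimension of the column span)
  of the matrix whose columns are these rows, i.e. of the transpose of D_S.\<close>
definition rank2 :: "bit mat \<Rightarrow> nat set \<Rightarrow> nat" where
  "rank2 D S = vec_space.rank (dim_col D)
     (mat_of_cols (dim_col D) (map (row D) (sorted_list_of_set S)))"

end

theory Submission
  imports Defs
begin

text \<open>Put \<open>S = \<B> - \<W>\<close> and \<open>r = |\<L>|\<close>: the rows of \<open>\<D>\<close> indexed by \<open>S\<close> are \<open>r + 1\<close>
  vectors spanning a space of dimension at most \<open>r\<close>. Call \<open>k \<in> S\<close> good if deleting row \<open>k\<close>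
  leaves rank \<open>r\<close>. If some \<open>k\<^sub>0\<close> is good, the remaining rows form a basis and
  \<open>y\<^sub>k\<^sub>0 = \<Sum> a\<^sub>k y\<^sub>k\<close>; by the exchange lemma \<open>k \<noteq> k\<^sub>0\<close> is good iff \<open>a\<^sub>k \<noteq> 0\<close>. So the good
  indices are exactly the support of a linear relation among the rows. Over GF(2) such a
  relation says that the good rows sum to zero; reading off the \<open>i\<close>-th coordinate, an even
  number of them have a nonzero entry there.\<close>

context vec_space begin

definition span_rank :: "'a vec set \<Rightarrow> nat" where
  "span_rank X = vectorspace.dim class_ring (span_vs X)"

lemma span_rank_ge_card_indpt:
  assumes "finite Y" "Y \<subseteq> carrier_vec n" "I \<subseteq> span Y" "lin_indpt I"
  shows "card I \<le> span_rank Y"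
proof -
  have vs: "vectorspace class_ring (span_vs Y)"
    using assms span_is_subspace subspace_def subspace_is_vs by simp
  have "submodule class_ring (span Y) V"
    using assms span_is_submodule by simp
  then have "\<not> LinearCombinations.module.lin_dep class_ring (span_vs Y) I"
    using span_li_not_depend(2)[OF assms(3)] assms(4) by simp
  moreover have "vectorspace.fin_dim class_ring (span_vs Y)"
    using fin_dim_span assms by simp
  ultimately show ?thesis
    unfolding span_rank_def
    using vectorspace.li_le_dim(2)[OF vs] assms(3)
      vectorspace.carrier_vs_is_self[OF vs]
    by simp
qed

lemma span_rank_eq_card_indpt_subset:
  assumes "finite X" "X \<subseteq> carrier_vec n"
  obtains M where "M \<subseteq> X" "lin_indpt M" "span_rank X = card M"
proof -
  obtain M where "finite M" "maximal M (\<lambda>T. T \<subseteq> X \<and> lin_indpt T)"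
    using maximal_exists_superset[of X "\<lambda>T. T \<subseteq> X \<and> lin_indpt T" "{}"] assms
    by (auto simp: lin_dep_def)
  moreover from this have "span_rank X = card M"
    unfolding span_rank_def using dim_span[OF assms(2,1)] by blast
  ultimately show ?thesis
    using that unfolding maximal_def by blast
qed

lemma span_rank_le_card:
  assumes "finite X" "X \<subseteq> carrier_vec n"
  shows "span_rank X \<le> card X"
  by (metis assms card_mono span_rank_eq_card_indpt_subset)

lemma span_rank_mono_span:
  assumes "finite X" "X \<subseteq> carrier_vec n" "finite Y" "Y \<subseteq> carrier_vec n" "X \<subseteq> span Y"
  shows "span_rank X \<le> span_rank Y"
proof -
  obtain M where M: "M \<subseteq> X" "lin_indpt M" "span_rank X = card M"
    using span_rank_eq_card_indpt_subset[OF assms(1,2)] .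
  have "card M \<le> span_rank Y"
    using M(1,2) assms(5) by (intro span_rank_ge_card_indpt[OF assms(3,4)]) auto
  with M(3) show ?thesis
    by simp
qed

lemma span_rank_mono:
  assumes "finite Y" "Y \<subseteq> carrier_vec n" "X \<subseteq> Y"
  shows "span_rank X \<le> span_rank Y"
  using assms span_rank_mono_span[of X Y] in_own_span[OF assms(2)]
  by (meson finite_subset order_trans)

lemma span_rank_indpt:
  assumes "finite X" "X \<subseteq> carrier_vec n" "lin_indpt X"
  shows "span_rank X = card X"
  using span_rank_le_card[OF assms(1,2)]
    span_rank_ge_card_indpt[OF assms(1,2) in_own_span[OF assms(2)] assms(3)]
  by simp

lemma lin_indpt_if_span_rank_eq_card:
  assumes "finite X" "X \<subseteq> carrier_vec n" "span_rank X = card X"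
  shows "lin_indpt X"
  using full_dim_span[OF assms(2,1)] assms(3) unfolding span_rank_def by simp

lemma indexed_lin_indpt_if_span_rank_eq_card:
  assumes "finite I" "f ` I \<subseteq> carrier_vec n" "span_rank (f ` I) = card I"
  shows "inj_on f I" "lin_indpt (f ` I)"
proof -
  have "card I \<le> card (f ` I)"
    using span_rank_le_card[OF finite_imageI[OF assms(1)] assms(2)] assms(3) by simp
  then have "card (f ` I) = card I"
    using card_image_le[OF assms(1), of f] by linarith
  then show "inj_on f I" "lin_indpt (f ` I)"
    using eq_card_imp_inj_on[OF assms(1)] assms
      lin_indpt_if_span_rank_eq_card[OF finite_imageI[OF assms(1)] assms(2)]
    by auto
qed

lemma in_span_if_span_rank_insert_le:
  assumes "finite I" "I \<subseteq> carrier_vec n" "x \<in> carrier_vec n" "lin_indpt I"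
    and "span_rank (insert x I) \<le> card I"
  shows "x \<in> span I"
proof (rule ccontr)
  assume x: "x \<notin> span I"
  then have "x \<notin> I"
    using in_own_span[OF assms(2)] by auto
  moreover from this have "lin_indpt (insert x I)"
    using lin_dep_iff_in_span[OF assms(2,4,3)] x by simp
  ultimately have "span_rank (insert x I) = card I + 1"
    using span_rank_indpt[of "insert x I"] assms(1-3) by simp
  with assms(5) show False by simp
qed

lemma in_span_insert_if_coefficient_nonzero:
  assumes "finite E" "E \<subseteq> carrier_vec n" "x \<in> carrier_vec n"
    and "v = a x \<cdot>\<^sub>v x + lincomb a E" "a x \<noteq> 0"
  shows "x \<in> span (insert v E)"
proof -
  have E': "insert v E \<subseteq> carrier_vec n"
    using assms lincomb_dim by auto
  have "lincomb a E \<in> span (insert v E)"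
    using span_is_monotone[of E "insert v E"] in_spanI[OF refl assms(1)] by blast
  moreover have "lincomb a E + a x \<cdot>\<^sub>v x \<in> span (insert v E)"
    using span_mem[OF E' insertI1] assms comm_add_vec[of "a x \<cdot>\<^sub>v x" n] lincomb_dim
    by simp
  ultimately have "a x \<cdot>\<^sub>v x \<in> span (insert v E)"
    using span_add[OF E'] assms(3) by simp
  then have "inverse (a x) \<cdot>\<^sub>v (a x \<cdot>\<^sub>v x) \<in> span (insert v E)"
    by (rule smult_in_span[OF E'])
  then show ?thesis
    using assms(5) by (simp add: smult_smult_assoc)
qed

lemma span_rank_replace_eq_card_iff:
  assumes "finite E" "insert x E \<subseteq> carrier_vec n" "x \<notin> E" "lin_indpt (insert x E)"
    and "v = lincomb a (insert x E)"
  shows "span_rank (insert v E) = card (insert x E) \<longleftrightarrow> a x \<noteq> 0"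
proof -
  have E: "E \<subseteq> carrier_vec n" and x: "x \<in> carrier_vec n"
    using assms(2) by auto
  have v: "v = a x \<cdot>\<^sub>v x + lincomb a E"
    using lincomb_insert2[OF assms(1) E _ assms(3) x] assms(5) by simp
  have vE: "insert v E \<subseteq> carrier_vec n"
    using v E x lincomb_dim[OF assms(1) E] by auto
  show ?thesis
  proof
    assume rank: "span_rank (insert v E) = card (insert x E)"
    show "a x \<noteq> 0"
    proof
      assume "a x = 0"
      then have "v \<in> span E"
        using v x in_spanI[OF refl assms(1) subset_refl, of a]
        by (simp add: carrier_vecI[OF lincomb_dim[OF assms(1) E]])
      then have "span_rank (insert v E) \<le> span_rank E"
        using span_rank_mono_span[OF _ vE assms(1) E] assms(1) in_own_span[OF E] by simp
      also have "\<dots> \<le> card E"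
        by (rule span_rank_le_card[OF assms(1) E])
      finally show False
        using rank assms(1,3) by simp
    qed
  next
    assume "a x \<noteq> 0"
    then have "x \<in> span (insert v E)"
      using in_span_insert_if_coefficient_nonzero[OF assms(1) E x v] by simp
    then have "insert x E \<subseteq> span (insert v E)"
      using in_own_span[OF vE] by auto
    then have "card (insert x E) \<le> span_rank (insert v E)"
      using span_rank_ge_card_indpt[OF _ vE _ assms(4)] assms(1) by simp
    moreover have "span_rank (insert v E) \<le> card (insert x E)"
      using span_rank_le_card[OF _ vE] assms(1,3) by (simp add: card_insert_if split: if_splits)
    ultimately show "span_rank (insert v E) = card (insert x E)"
      by simp
  qed
qed

lemma exists_relation_supported_on_full_rank_deletions:
  fixes f :: "'i \<Rightarrow> 'a vec"
  assumes S: "finite S" "card S = r + 1" "f ` S \<subseteq> carrier_vec n"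
    and rank_S: "span_rank (f ` S) \<le> r"
  shows "\<exists>c. (\<forall>j<n. (\<Sum>k\<in>S. c k * f k $ j) = 0)
           \<and> (\<forall>k\<in>S. c k \<noteq> 0 \<longleftrightarrow> span_rank (f ` (S - {k})) = r)"
proof (cases "\<exists>k0\<in>S. span_rank (f ` (S - {k0})) = r")
  case False
  then show ?thesis
    by (intro exI[of _ "\<lambda>_. 0"]) auto
next
  case True
  then obtain k0 where k0: "k0 \<in> S" and rank_U: "span_rank (f ` (S - {k0})) = r"
    by blast
  define U where "U = S - {k0}"
  have U: "finite U" "card U = r" "f ` U \<subseteq> carrier_vec n" and fk0: "f k0 \<in> carrier_vec n"
    using S k0 unfolding U_def by auto
  have inj: "inj_on f U" and indpt: "lin_indpt (f ` U)"
    using indexed_lin_indpt_if_span_rank_eq_card[OF U(1,3)] rank_U U(2) unfolding U_def by auto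
  have card_fU: "card (f ` U) = r"
    using card_image[OF inj] U(2) by simp
  have "insert (f k0) (f ` U) = f ` S"
    using k0 unfolding U_def by auto
  then have "f k0 \<in> span (f ` U)"
    using in_span_if_span_rank_insert_le[OF _ U(3) fk0 indpt] U(1) rank_S card_fU by simp
  then obtain a where a: "f k0 = lincomb a (f ` U)"
    using finite_span[OF finite_imageI[OF U(1)] U(3)] by blast
  \<comment> \<open>the relation \<open>f k0 - lincomb a (f ` U) = 0\<close>, written with coefficients indexed by \<open>S\<close>\<close>
  define c where "c k = (if k = k0 then - 1 else a (f k))" for k
  have "(\<Sum>k\<in>S. c k * f k $ j) = 0" if j: "j < n" for j
  proof -
    have "(\<Sum>k\<in>S. c k * f k $ j) = - f k0 $ j + (\<Sum>k\<in>U. a (f k) * f k $ j)"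
      unfolding sum.remove[OF S(1) k0] U_def c_def by (auto intro: sum.cong)
    also have "(\<Sum>k\<in>U. a (f k) * f k $ j) = f k0 $ j"
      unfolding a lincomb_index[OF j U(3)] sum.reindex[OF inj] by simp
    finally show ?thesis
      by simp
  qed
  moreover have "c k \<noteq> 0 \<longleftrightarrow> span_rank (f ` (S - {k})) = r" if k: "k \<in> S" for k
  proof (cases "k = k0")
    case True
    then show ?thesis
      using rank_U unfolding c_def by simp
  next
    case False
    then have kU: "k \<in> U"
      using k unfolding U_def by simp
    have "insert (f k) (f ` (U - {k})) = f ` U" "insert (f k0) (f ` (U - {k})) = f ` (S - {k})"
      using kU k0 unfolding U_def by auto
    moreover have "f k \<notin> f ` (U - {k})"
      using inj kU by (auto simp: inj_on_def)
    ultimately have "span_rank (f ` (S - {k})) = r \<longleftrightarrow> a (f k) \<noteq> 0"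
      using span_rank_replace_eq_card_iff[of "f ` (U - {k})" "f k" "f k0" a] U(1,3) indpt a card_fU
      by simp
    then show ?thesis
      using False unfolding c_def by simp
  qed
  ultimately show ?thesis
    by blast
qed

end

lemma bit_sum_eq_0_iff_even_card:
  fixes g :: "'i \<Rightarrow> bit"
  assumes "finite T"
  shows "sum g T = 0 \<longleftrightarrow> even (card {k\<in>T. g k \<noteq> 0})"
proof -
  have "sum g T = (\<Sum>k\<in>T. of_bool (g k \<noteq> 0))"
    by (rule sum.cong) simp_all
  also have "\<dots> = of_nat (card {k\<in>T. g k \<noteq> 0})"
    using assms by (simp add: Int_def)
  finally show ?thesis
    by (metis bit_2_eq_0 dvd_0_left_iff even_of_nat)
qed

lemma even_card_full_rank_deletions_with_nonzero_entry:
  fixes f :: "'i \<Rightarrow> bit vec"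
  assumes "finite S" "card S = r + 1" "f ` S \<subseteq> carrier_vec n"
    and "vec_space.span_rank n (f ` S) \<le> r" and i: "i < n"
  shows "even (card {k\<in>S. vec_space.span_rank n (f ` (S - {k})) = r \<and> f k $ i \<noteq> 0})"
proof -
  define T where "T = {k\<in>S. vec_space.span_rank n (f ` (S - {k})) = r}"
  obtain c where rel: "(\<Sum>k\<in>S. c k * f k $ i) = 0" and supp: "\<forall>k\<in>S. c k \<noteq> 0 \<longleftrightarrow> k \<in> T"
    using vec_space.exists_relation_supported_on_full_rank_deletions[OF assms(1-4)] i
    unfolding T_def by blast
  have "(\<Sum>k\<in>T. f k $ i) = (\<Sum>k\<in>S. if k \<in> T then f k $ i else 0)"
    using assms(1) unfolding T_def by (simp add: sum.inter_filter)
  also have "\<dots> = (\<Sum>k\<in>S. c k * f k $ i)"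
    using supp by (intro sum.cong) auto
  finally have "(\<Sum>k\<in>T. f k $ i) = 0"
    using rel by simp
  moreover have "finite T"
    using assms(1) unfolding T_def by simp
  ultimately have "even (card {k\<in>T. f k $ i \<noteq> 0})"
    by (simp add: bit_sum_eq_0_iff_even_card)
  moreover have "{k\<in>T. f k $ i \<noteq> 0} = {k\<in>S. vec_space.span_rank n (f ` (S - {k})) = r \<and> f k $ i \<noteq> 0}"
    unfolding T_def by blast
  ultimately show ?thesis
    by simp
qed

lemma rank2_eq_span_rank:
  assumes "finite X"
  shows "rank2 D X = vec_space.span_rank (dim_col D) (row D ` X)"
proof -
  have "set (map (row D) (sorted_list_of_set X)) \<subseteq> carrier_vec (dim_col D)"
    by auto
  then show ?thesis
    unfolding rank2_def vec_space.rank_def vec_space.span_rank_def using assms by simp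
qed

theorem lemma1:
  fixes K N t i :: nat and D :: "bit mat" and L A W :: "nat set"
  assumes "K \<ge> 1" and "N \<ge> 1" and "t < K"
    and "D \<in> carrier_mat K N"
    and "L \<subseteq> {0..<K}"
    and "card L = rank2 D L" and "rank2 D L = rank2 D {0..<K}"
    and "A \<subseteq> {0..<K} - L" and "card A = t + 1"
    and "W \<subseteq> L \<union> A" and "card W = t"
    and "i < N"
  shows "even (card {k \<in> (L \<union> A) - W.
            rank2 D ((L \<union> A) - (W \<union> {k})) = card L \<and> D $$ (k, i) \<noteq> 0})"
proof -
  define S where "S = (L \<union> A) - W"
  have D: "dim_col D = N" "dim_row D = K"
    using assms(4) by auto
  have S: "S \<subseteq> {0..<K}" "finite S"
    using assms(5,8) unfolding S_def by (auto intro: finite_subset)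
  have L: "finite L" and A: "finite A"
    using assms(5,8) by (auto intro: rev_finite_subset[OF finite_atLeastLessThan])
  have "card (L \<union> A) = card L + (t + 1)"
    using card_Un_disjoint[OF L A] assms(8,9) by auto
  then have card_S: "card S = card L + 1"
    unfolding S_def using card_Diff_subset[OF finite_subset[OF assms(10)] assms(10)] L A assms(11)
    by simp
  have rows: "row D ` {0..<K} \<subseteq> carrier_vec N"
    using D by auto
  have "vec_space.span_rank N (row D ` S) \<le> vec_space.span_rank N (row D ` {0..<K})"
    using S(1) by (intro vec_space.span_rank_mono[OF _ rows]) auto
  also have "\<dots> = card L"
    using rank2_eq_span_rank[of "{0..<K}" D] assms(6,7) D by simp
  finally have "vec_space.span_rank N (row D ` S) \<le> card L" .
  moreover have "row D ` S \<subseteq> carrier_vec N"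
    using rows S(1) by auto
  ultimately have "even (card {k\<in>S. vec_space.span_rank N (row D ` (S - {k})) = card L \<and> row D k $ i \<noteq> 0})"
    using even_card_full_rank_deletions_with_nonzero_entry[OF S(2) card_S _ _ assms(12)] by blast
  moreover have "{k\<in>S. vec_space.span_rank N (row D ` (S - {k})) = card L \<and> row D k $ i \<noteq> 0}
      = {k\<in>S. rank2 D ((L \<union> A) - (W \<union> {k})) = card L \<and> D $$ (k, i) \<noteq> 0}"
  proof (rule Collect_cong)
    fix k
    have "(L \<union> A) - (W \<union> {k}) = S - {k}"
      unfolding S_def by blast
    moreover have "rank2 D (S - {k}) = vec_space.span_rank N (row D ` (S - {k}))"
      using rank2_eq_span_rank[of "S - {k}" D] S(2) D by simp
    ultimately show "(k \<in> S \<and> vec_space.span_rank N (row D ` (S - {k})) = card L \<and> row D k $ i \<noteq> 0)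
      \<longleftrightarrow> (k \<in> S \<and> rank2 D ((L \<union> A) - (W \<union> {k})) = card L \<and> D $$ (k, i) \<noteq> 0)"
      using S(1) D assms(12) by auto
  qed
  ultimately show ?thesis
    unfolding S_def[symmetric] by simp
qed

end
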